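(* Let $\nu\in[0,1]$, let $\|u\|_C=[(1-\nu)\|u\|_1^2+\nu\|u\|_2^2]^{1/2}$ on $\mathbb{R}^N$ and $\|\cdot\|_R=\|\cdot\|_2$ on $\mathbb{R}^P$, and let $F(A)=(1-\nu)\sum_{i,j=1}^N|A_{ij}|+\nu\operatorname{tr}A$ for symmetric $A\in\mathbb{R}^{N\times N}$ (so that $F(uu^\top)=\|u\|_C^2$). Then for every $X\in\mathbb{R}^{N\times P}$, $$\|X\|_D\ \ge\ \inf\Big\{\tfrac12F(A)+\tfrac12\operatorname{tr}\big(X^\top A^{+}X\big)\;:\;A\in\mathbb{R}^{N\times N},\ A\succeq0,\ \operatorname{range}(X)\subseteq\operatorname{range}(A)\Big\},$$ where $A^+$ is the Moore–Penrose pseudo-inverse.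
   Context: For $M\ge 1$ and $X\in\mathbb{R}^{N\times P}$, $f_D^M(X)=\inf\{\tfrac12\sum_{m=1}^M(\|u_m\|_C^2+\|v_m\|_R^2): U=[u_1,\dots,u_M]\in\mathbb{R}^{N\times M}, V=[v_1,\dots,v_M]\in\mathbb{R}^{P\times M}, X=UV^\top\}$ (with $\inf\emptyset=+\infty$), and the decomposition norm is $\|X\|_D=\lim_{M\to\infty}f_D^M(X)$. *)

theory Defs
  imports "HOL-Analysis.Analysis"
begin

definition normC :: "real \<Rightarrow> real^'n \<Rightarrow> real" where
  "normC \<nu> u = sqrt ((1 - \<nu>) * (\<Sum>i\<in>UNIV. \<bar>u $ i\<bar>)\<^sup>2 + \<nu> * (norm u)\<^sup>2)"

definition normR :: "real^'p \<Rightarrow> real" where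
  "normR v = norm v"

text \<open>f_D^M(X): infimum over factorisations X = U V^T with M columns, U = [u_0..u_{M-1}],
  V = [v_0..v_{M-1}]; the entry (i,j) of U V^T is the sum over m of u_m(i) v_m(j).
  Infimum in ereal, so inf of the empty set is +infinity.\<close>
definition fD :: "real \<Rightarrow> nat \<Rightarrow> real^'p^'n \<Rightarrow> ereal" where
  "fD \<nu> M X = Inf {ereal ((1/2) * (\<Sum>m<M. (normC \<nu> (u m))\<^sup>2 + (normR (v m))\<^sup>2)) | u v.
       X = (\<chi> i j. \<Sum>m<M. u m $ i * v m $ j)}"

definition normD :: "real \<Rightarrow> real^'p^'n \<Rightarrow> ereal" where
  "normD \<nu> X = lim (\<lambda>M. fD \<nu> M X)"

definition Ffun :: "real \<Rightarrow> real^'n^'n \<Rightarrow> real" where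
  "Ffun \<nu> A = (1 - \<nu>) * (\<Sum>i\<in>UNIV. \<Sum>j\<in>UNIV. \<bar>A $ i $ j\<bar>) + \<nu> * trace A"

definition psd :: "real^'n^'n \<Rightarrow> bool" where
  "psd A \<longleftrightarrow> transpose A = A \<and> (\<forall>x. 0 \<le> x \<bullet> (A *v x))"

definition pinv :: "real^'m^'n \<Rightarrow> real^'n^'m" where
  "pinv A = (THE B. A ** B ** A = A \<and> B ** A ** B = B \<and>
                    transpose (A ** B) = A ** B \<and> transpose (B ** A) = B ** A)"

end

theory Submission imports Defs begin

(* Fix a factorisation X = sum_m u_m v_m^T with M terms and a regularisation
   parameter e > 0, and put A = e I + sum_m u_m u_m^T (a regularised Gram matrix).
   A is positive definite, so pinv A is its ordinary inverse and the range condition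
   is automatic. Two estimates make A an admissible point of cost at most
   (1/2) sum_m (|u_m|_C^2 + |v_m|_R^2) + e/2:
     - F(A) <= e N + sum_m |u_m|_C^2, by the triangle inequality entrywise;
     - for every column x = sum_m w_m u_m of X, x^T A^{-1} x <= sum_m w_m^2, by
       Cauchy-Schwarz (the variational characterisation of x^T A^{-1} x).
   Letting e -> 0 bounds the infimum by every f_D^M(X). Since f_D^M(X) is
   decreasing in M (pad factorisations with zero columns), its limit is its
   infimum over M, which yields the theorem. *)

definition reg_gram :: "real \<Rightarrow> nat \<Rightarrow> (nat \<Rightarrow> real^'n) \<Rightarrow> real^'n^'n" where
  "reg_gram e M u = (\<chi> i j. (if i = j then e else 0) + (\<Sum>m<M. u m $ i * u m $ j))"

lemma reg_gram_mult_vec: "reg_gram e M u *v y = e *\<^sub>R y + (\<Sum>m<M. (u m \<bullet> y) *\<^sub>R u m)"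
proof -
  have "(reg_gram e M u *v y) $ i = (e *\<^sub>R y + (\<Sum>m<M. (u m \<bullet> y) *\<^sub>R u m)) $ i" for i
  proof -
    have "(reg_gram e M u *v y) $ i
        = (\<Sum>j\<in>UNIV. ((if i = j then e else 0) + (\<Sum>m<M. u m $ i * u m $ j)) * y $ j)"
      by (simp add: reg_gram_def matrix_vector_mult_def)
    also have "\<dots> = (\<Sum>j\<in>UNIV. (if i = j then e else 0) * y $ j)
                   + (\<Sum>j\<in>UNIV. \<Sum>m<M. u m $ i * u m $ j * y $ j)"
      by (simp add: distrib_right sum.distrib sum_distrib_right)
    also have "\<dots> = e * y $ i + (\<Sum>m<M. \<Sum>j\<in>UNIV. u m $ i * u m $ j * y $ j)"
      by (simp add: sum.swap[of _ UNIV] if_distrib[of "\<lambda>a. a * _"] cong: if_cong)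
    also have "\<dots> = (e *\<^sub>R y + (\<Sum>m<M. (u m \<bullet> y) *\<^sub>R u m)) $ i"
      by (simp add: inner_vec_def sum_component sum_distrib_left mult.commute mult.left_commute)
    finally show ?thesis .
  qed
  then show ?thesis by (simp add: vec_eq_iff)
qed

lemma reg_gram_quadratic_form: "y \<bullet> (reg_gram e M u *v y) = e * (y \<bullet> y) + (\<Sum>m<M. (u m \<bullet> y)^2)"
  by (simp add: reg_gram_mult_vec inner_add_right inner_sum_right power2_eq_square inner_commute)

lemma reg_gram_psd:
  assumes "e \<ge> 0" shows "psd (reg_gram e M u)"
proof -
  have "transpose (reg_gram e M u) = reg_gram e M u"
    by (simp add: reg_gram_def transpose_def vec_eq_iff mult.commute)
  then show ?thesis
    unfolding psd_def using assms by (simp add: reg_gram_quadratic_form sum_nonneg)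
qed

text \<open>For e > 0 the quadratic form is positive definite, hence the matrix is invertible.\<close>
lemma reg_gram_invertible:
  assumes "e > 0" shows "invertible (reg_gram e M u)"
proof -
  have "inj ((*v) (reg_gram e M u))"
  proof (rule injI)
    fix x y assume "reg_gram e M u *v x = reg_gram e M u *v y"
    then have "(x - y) \<bullet> (reg_gram e M u *v (x - y)) = 0"
      by (simp add: matrix_vector_mult_diff_distrib)
    moreover have "(\<Sum>m<M. (u m \<bullet> (x - y))^2) \<ge> 0" by (simp add: sum_nonneg)
    ultimately have "e * ((x - y) \<bullet> (x - y)) \<le> 0"
      unfolding reg_gram_quadratic_form by linarith
    with assms have "(x - y) \<bullet> (x - y) \<le> 0" by (simp add: mult_le_0_iff)
    then have "x - y = 0" using inner_gt_zero_iff[of "x - y"] by linarith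
    then show "x = y" by simp
  qed
  then show ?thesis
    using matrix_left_invertible_injective invertible_left_inverse by blast
qed

text \<open>The pseudo-inverse of an invertible matrix is its inverse: the two-sided inverse
  satisfies the Penrose equations, and any solution of them is forced to equal it.\<close>
lemma pinv_two_sided_inverse:
  assumes "B ** A = mat 1" "A ** B = mat 1" shows "pinv A = B"
  unfolding pinv_def
proof (rule the_equality)
  show "A ** B ** A = A \<and> B ** A ** B = B \<and> transpose (A ** B) = A ** B \<and> transpose (B ** A) = B ** A"
    using assms by (simp add: matrix_mul_assoc[symmetric])
next
  fix C assume "A ** C ** A = A \<and> C ** A ** C = C \<and> transpose (A ** C) = A ** C \<and> transpose (C ** A) = C ** A"
  then have "B ** (A ** C ** A) ** B = B ** A ** B" by simp
  moreover have "B ** (A ** C ** A) ** B = (B ** A) ** C ** (A ** B)"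
    by (simp add: matrix_mul_assoc)
  ultimately show "C = B" using assms by simp
qed

text \<open>Variational bound: if A y = x with A = e I + sum u_m u_m^T (e >= 0) and
  x = sum w_m u_m, then x^T y (that is, x^T A^{-1} x) is at most sum w_m^2.
  With t = x^T y we have t = sum w_m (u_m . y) and t >= sum (u_m . y)^2, so
  Cauchy-Schwarz gives t^2 <= (sum w_m^2) t.\<close>
lemma reg_gram_solution_bound:
  fixes u :: "nat \<Rightarrow> real^'n"
  assumes e: "e \<ge> 0" and sol: "reg_gram e M u *v y = x"
    and x: "x = (\<chi> i. \<Sum>m<M. u m $ i * w m)"
  shows "x \<bullet> y \<le> (\<Sum>m<M. (w m)^2)"
proof -
  define t where "t = x \<bullet> y"
  have t_coeffs: "t = (\<Sum>m<M. w m * (u m \<bullet> y))"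
    unfolding t_def x
    by (simp add: inner_vec_def sum_distrib_left sum_distrib_right sum.swap[of _ UNIV]
        mult.commute mult.left_commute)
  have t_form: "t = e * (y \<bullet> y) + (\<Sum>m<M. (u m \<bullet> y)^2)"
    unfolding t_def using reg_gram_quadratic_form[of y e M u] sol by (simp add: inner_commute)
  have sq_le_t: "(\<Sum>m<M. (u m \<bullet> y)^2) \<le> t" and t_nonneg: "0 \<le> t"
    using t_form e by (simp_all add: sum_nonneg)
  have "t^2 \<le> (\<Sum>m<M. (w m)^2) * (\<Sum>m<M. (u m \<bullet> y)^2)"
    unfolding t_coeffs by (rule Cauchy_Schwarz_ineq_sum)
  also have "\<dots> \<le> (\<Sum>m<M. (w m)^2) * t"
    by (rule mult_left_mono[OF sq_le_t]) (simp add: sum_nonneg)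
  finally have t_sq_le: "t * t \<le> (\<Sum>m<M. (w m)^2) * t" by (simp add: power2_eq_square)
  have "t \<le> (\<Sum>m<M. (w m)^2)"
  proof (cases "t = 0")
    case True then show ?thesis by (simp add: sum_nonneg)
  next
    case False with t_nonneg have "t > 0" by simp
    then show ?thesis using t_sq_le mult_right_le_imp_le by blast
  qed
  then show ?thesis by (simp add: t_def)
qed

lemma trace_congruence_columns:
  fixes X :: "real^'p^'n" and B :: "real^'n^'n"
  shows "trace (transpose X ** B ** X) = (\<Sum>j\<in>UNIV. column j X \<bullet> (B *v column j X))"
  unfolding trace_def
proof (rule sum.cong[OF refl])
  fix j
  have "(transpose X ** B ** X) $ j $ j = (\<Sum>k\<in>UNIV. (\<Sum>i\<in>UNIV. X$i$j * B$i$k) * X$k$j)"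
    by (simp add: matrix_matrix_mult_def transpose_def)
  also have "\<dots> = (\<Sum>k\<in>UNIV. \<Sum>i\<in>UNIV. X$i$j * B$i$k * X$k$j)"
    by (simp add: sum_distrib_right)
  also have "\<dots> = (\<Sum>i\<in>UNIV. \<Sum>k\<in>UNIV. X$i$j * B$i$k * X$k$j)"
    by (rule sum.swap)
  also have "\<dots> = column j X \<bullet> (B *v column j X)"
    unfolding column_def by (simp add: inner_vec_def matrix_vector_mult_def sum_distrib_left mult.assoc)
  finally show "(transpose X ** B ** X) $ j $ j = column j X \<bullet> (B *v column j X)" .
qed

lemma trace_reg_gram_inverse_bound:
  fixes X :: "real^'p^'n" and u :: "nat \<Rightarrow> real^'n" and v :: "nat \<Rightarrow> real^'p"
  assumes e: "e \<ge> 0" and X: "X = (\<chi> i j. \<Sum>m<M. u m $ i * v m $ j)"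
    and inv: "reg_gram e M u ** B = mat 1"
  shows "trace (transpose X ** B ** X) \<le> (\<Sum>m<M. (normR (v m))\<^sup>2)"
proof -
  have "trace (transpose X ** B ** X) = (\<Sum>j\<in>UNIV. column j X \<bullet> (B *v column j X))"
    by (rule trace_congruence_columns)
  also have "\<dots> \<le> (\<Sum>j\<in>UNIV. \<Sum>m<M. (v m $ j)^2)"
  proof (rule sum_mono)
    fix j
    have sol: "reg_gram e M u *v (B *v column j X) = column j X"
      by (simp add: matrix_vector_mul_assoc inv)
    have col: "column j X = (\<chi> i. \<Sum>m<M. u m $ i * v m $ j)"
      unfolding X column_def by simp
    show "column j X \<bullet> (B *v column j X) \<le> (\<Sum>m<M. (v m $ j)^2)"
      by (rule reg_gram_solution_bound[OF e sol col])
  qed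
  also have "\<dots> = (\<Sum>m<M. (normR (v m))\<^sup>2)"
    unfolding normR_def power2_norm_eq_inner inner_vec_def
    by (simp add: power2_eq_square sum.swap[of _ UNIV])
  finally show ?thesis .
qed

text \<open>The entrywise l1 part of F: triangle inequality plus (sum |u_i|)^2 = sum_ij |u_i| |u_j|.\<close>
lemma reg_gram_entry_abs_sum:
  fixes u :: "nat \<Rightarrow> real^'n"
  assumes "e \<ge> 0"
  shows "(\<Sum>i\<in>UNIV. \<Sum>j\<in>UNIV. \<bar>reg_gram e M u $ i $ j\<bar>)
           \<le> e * CARD('n) + (\<Sum>m<M. (\<Sum>i\<in>UNIV. \<bar>u m $ i\<bar>)^2)"
proof -
  have "(\<Sum>i\<in>UNIV. \<Sum>j\<in>UNIV. \<bar>reg_gram e M u $ i $ j\<bar>) \<le>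
     (\<Sum>i\<in>UNIV. \<Sum>j\<in>UNIV. (if i = j then e else 0) + (\<Sum>m<M. \<bar>u m $ i\<bar> * \<bar>u m $ j\<bar>))"
  proof (intro sum_mono)
    fix i j
    have "\<bar>reg_gram e M u $ i $ j\<bar> \<le> \<bar>if i = j then e else 0\<bar> + \<bar>\<Sum>m<M. u m $ i * u m $ j\<bar>"
      by (simp add: reg_gram_def abs_triangle_ineq)
    also have "\<dots> \<le> (if i = j then e else 0) + (\<Sum>m<M. \<bar>u m $ i\<bar> * \<bar>u m $ j\<bar>)"
      using assms by (intro add_mono) (auto simp: abs_mult[symmetric] intro: sum_abs[THEN order_trans])
    finally show "\<bar>reg_gram e M u $ i $ j\<bar> \<le> (if i = j then e else 0) + (\<Sum>m<M. \<bar>u m $ i\<bar> * \<bar>u m $ j\<bar>)" .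
  qed
  also have "\<dots> = e * CARD('n) + (\<Sum>m<M. (\<Sum>i\<in>UNIV. \<bar>u m $ i\<bar>)^2)"
    by (simp add: sum.distrib power2_eq_square sum_product sum.swap[of _ "{..<M}"] mult.commute)
  finally show ?thesis .
qed

text \<open>For nu in [0,1] the radicand defining the norm C is nonnegative.\<close>
lemma normC_squared:
  assumes "0 \<le> \<nu>" "\<nu> \<le> 1"
  shows "(normC \<nu> w)^2 = (1 - \<nu>) * (\<Sum>i\<in>UNIV. \<bar>w $ i\<bar>)\<^sup>2 + \<nu> * (norm w)\<^sup>2"
  unfolding normC_def using assms by (intro real_sqrt_pow2) simp

lemma Ffun_reg_gram_bound:
  fixes u :: "nat \<Rightarrow> real^'n"
  assumes \<nu>: "0 \<le> \<nu>" "\<nu> \<le> 1" and e: "e \<ge> 0"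
  shows "Ffun \<nu> (reg_gram e M u) \<le> e * CARD('n) + (\<Sum>m<M. (normC \<nu> (u m))^2)"
proof -
  have trace_eq: "trace (reg_gram e M u) = e * CARD('n) + (\<Sum>m<M. (norm (u m))^2)"
    by (simp add: trace_def reg_gram_def sum.distrib power2_norm_eq_inner inner_vec_def
        sum.swap[of _ "{..<M}"] mult.commute)
  have "Ffun \<nu> (reg_gram e M u)
      \<le> (1 - \<nu>) * (e * CARD('n) + (\<Sum>m<M. (\<Sum>i\<in>UNIV. \<bar>u m $ i\<bar>)^2)) + \<nu> * trace (reg_gram e M u)"
    unfolding Ffun_def using reg_gram_entry_abs_sum[OF e] \<nu> by (intro add_mono mult_left_mono) auto
  also have "\<dots> = e * CARD('n) + (\<Sum>m<M. (normC \<nu> (u m))^2)"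
    unfolding trace_eq normC_squared[OF \<nu>] sum.distrib sum_distrib_left[symmetric]
    by (simp add: algebra_simps)
  finally show ?thesis .
qed

text \<open>The relaxation's objective is at most the cost of any factorisation X = U V^T:
  the regularised Gram matrices are admissible with objective at most cost + e/2.\<close>
lemma relaxation_le_factorisation_cost:
  fixes X :: "real^'p^'n" and u :: "nat \<Rightarrow> real^'n" and v :: "nat \<Rightarrow> real^'p"
  assumes \<nu>: "0 \<le> \<nu>" "\<nu> \<le> 1" and X: "X = (\<chi> i j. \<Sum>m<M. u m $ i * v m $ j)"
  shows "Inf {ereal ((1/2) * Ffun \<nu> A + (1/2) * trace (transpose X ** pinv A ** X)) | A :: real^'n^'n.
           psd A \<and> range (\<lambda>x. X *v x) \<subseteq> range (\<lambda>y. A *v y)}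
         \<le> ereal ((1/2) * (\<Sum>m<M. (normC \<nu> (u m))\<^sup>2 + (normR (v m))\<^sup>2))"
    (is "?S \<le> ereal ?cost")
proof (rule ereal_le_epsilon2)
  fix e :: real assume "0 < e"
  define e' where "e' = e / real CARD('n)"
  define A where "A = reg_gram e' M u"
  have e': "0 < e'" using \<open>0 < e\<close> by (simp add: e'_def)
  obtain B where AB: "A ** B = mat 1" "B ** A = mat 1"
    using reg_gram_invertible[OF e'] unfolding A_def invertible_def by blast
  have "range (\<lambda>x. X *v x) \<subseteq> range (\<lambda>y. A *v y)"
  proof clarify
    fix x
    have "X *v x = A *v (B *v (X *v x))" by (simp add: matrix_vector_mul_assoc matrix_mul_assoc AB)
    then show "X *v x \<in> range (\<lambda>y. A *v y)" by blast
  qed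
  moreover have "psd A" unfolding A_def using e' by (simp add: reg_gram_psd)
  ultimately have "?S \<le> ereal ((1/2) * Ffun \<nu> A + (1/2) * trace (transpose X ** pinv A ** X))"
    by (intro Inf_lower) blast
  also have "\<dots> \<le> ereal ?cost + ereal e"
  proof -
    have "trace (transpose X ** pinv A ** X) \<le> (\<Sum>m<M. (normR (v m))\<^sup>2)"
      unfolding pinv_two_sided_inverse[OF AB(2,1)]
      using e' AB(1) unfolding A_def by (intro trace_reg_gram_inverse_bound[OF _ X]) simp_all
    moreover have "Ffun \<nu> A \<le> e + (\<Sum>m<M. (normC \<nu> (u m))^2)"
      using Ffun_reg_gram_bound[OF \<nu>, of e' M u] e' unfolding A_def e'_def by simp
    ultimately show ?thesis using \<open>0 < e\<close> by (simp add: sum.distrib algebra_simps)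
  qed
  finally show "?S \<le> ereal ?cost + ereal e" .
qed

text \<open>Padding a factorisation with a zero column does not change its cost,
  so f_D^M(X) is decreasing in M.\<close>
lemma fD_decseq: "decseq (\<lambda>M. fD \<nu> M X)"
proof (rule decseq_SucI)
  fix M
  have "fD \<nu> (Suc M) X \<le> ereal ((1/2) * (\<Sum>m<M. (normC \<nu> (u m))\<^sup>2 + (normR (v m))\<^sup>2))"
    if X: "X = (\<chi> i j. \<Sum>m<M. u m $ i * v m $ j)" for u v
  proof -
    let ?u = "u(M := 0)" and ?v = "v(M := 0)"
    have "X = (\<chi> i j. \<Sum>m<Suc M. ?u m $ i * ?v m $ j)" using X by simp
    moreover have "(\<Sum>m<Suc M. (normC \<nu> (?u m))\<^sup>2 + (normR (?v m))\<^sup>2)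
                 = (\<Sum>m<M. (normC \<nu> (u m))\<^sup>2 + (normR (v m))\<^sup>2)"
      by (simp add: normC_def normR_def)
    ultimately show ?thesis unfolding fD_def by (intro Inf_lower2) (blast, simp)
  qed
  then show "fD \<nu> (Suc M) X \<le> fD \<nu> M X"
    unfolding fD_def[of \<nu> M X] by (intro Inf_greatest) blast
qed

lemma normD_eq_INF: "normD \<nu> X = (INF M. fD \<nu> M X)"
  unfolding normD_def by (rule limI[OF LIMSEQ_INF[OF fD_decseq]])

theorem mainTheorem6:
  fixes \<nu> :: real and X :: "real^'p^'n"
  assumes "0 \<le> \<nu>" and "\<nu> \<le> 1"
  shows "normD \<nu> X \<ge>
    Inf {ereal ((1/2) * Ffun \<nu> A + (1/2) * trace (transpose X ** pinv A ** X)) | A :: real^'n^'n.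
           psd A \<and> range (\<lambda>x. X *v x) \<subseteq> range (\<lambda>y. A *v y)}"
  (is "_ \<ge> ?S")
proof -
  have "?S \<le> fD \<nu> M X" for M
    unfolding fD_def
    using relaxation_le_factorisation_cost[OF assms] by (intro Inf_greatest) blast
  then show ?thesis by (simp add: normD_eq_INF le_INF_iff)
qed

end
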